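(* Let $X\subseteq\Omega$ be club in $\Omega$ with $0\notin X$. If $\xi\in X$ and $\xi<\Theta_X(\varepsilon_{\Omega+1})$, then there is $\zeta<\varepsilon_{\Omega+1}$ with $\Theta_X(\zeta)=\xi$.
   Context: $\Omega$ is the first uncountable ordinal; $\varepsilon_{\Omega+1}$ the least $\varepsilon>\Omega$ with $\omega^\varepsilon=\varepsilon$. Every $0<\xi<\varepsilon_{\Omega+1}$ has a unique $\Omega$-normal form $\xi=\Omega^{\alpha}\beta+\gamma$ with $0<\beta<\Omega$, $\gamma<\Omega^{\alpha}$; $C(0)=\{0\}$, $C(\Omega^\alpha\beta+\gamma)=C(\alpha)\cup C(\gamma)\cup\{\beta\}$; $\xi^*=\max C(\xi)$. $\Theta_X(\xi)$ is defined by recursion on $\xi<\varepsilon_{\Omega+1}$ as the least $\theta\in X$ with $\theta>\xi^*$ such that every $\zeta<\xi$ with $\zeta^*<\theta$ satisfies $\Theta_X(\zeta)<\theta$. With $\Omega_0=1$, $\Omega_{n+1}=\Omega^{\Omega_n}$, $\Theta_X(\varepsilon_{\Omega+1}):=\sup_{n<\omega}\Theta_X(\Omega_n)$. *)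

theory Defs
  imports Main "HOL-Library.Countable_Set"
begin

text \<open>Omega (the first uncountable ordinal) is modelled by a well-ordered type 'o
whose universe is uncountable while every proper initial segment is countable
(i.e. 'o has order type omega_1).  Ordinals below epsilon_{Omega+1} are represented
by their Omega-normal forms: Node a b c stands for Omega^a * b + c.\<close>

definition omega1_type :: "'o::wellorder itself \<Rightarrow> bool" where
  "omega1_type _ \<longleftrightarrow> uncountable (UNIV :: 'o set) \<and> (\<forall>x::'o. countable {y. y < x})"

definition ozero :: "'o::wellorder" where
  "ozero = (LEAST x. True)"

definition oone :: "'o::wellorder" where
  "oone = (LEAST x. ozero < x)"

datatype 'o onf = Zero | Node "'o onf" 'o "'o onf"

fun onf_less :: "'o::wellorder onf \<Rightarrow> 'o onf \<Rightarrow> bool" where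
  "onf_less Zero Zero = False"
| "onf_less Zero (Node _ _ _) = True"
| "onf_less (Node _ _ _) Zero = False"
| "onf_less (Node a b c) (Node a' b' c') =
     (onf_less a a' \<or> (a = a' \<and> (b < b' \<or> (b = b' \<and> onf_less c c'))))"

text \<open>Well-formed normal forms: 0 < beta and gamma < Omega^alpha.\<close>
fun onf_valid :: "'o::wellorder onf \<Rightarrow> bool" where
  "onf_valid Zero = True"
| "onf_valid (Node a b c) =
     (onf_valid a \<and> onf_valid c \<and> ozero < b \<and>
      (case c of Zero \<Rightarrow> True | Node a' _ _ \<Rightarrow> onf_less a' a))"

fun coeffs :: "'o::wellorder onf \<Rightarrow> 'o set" where
  "coeffs Zero = {ozero}"
| "coeffs (Node a b c) = coeffs a \<union> coeffs c \<union> {b}"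

definition ostar :: "'o::wellorder onf \<Rightarrow> 'o" where
  "ostar x = Max (coeffs x)"

definition onf_rel :: "('o::wellorder onf \<times> 'o onf) set" where
  "onf_rel = {(z, x). onf_valid z \<and> onf_valid x \<and> onf_less z x}"

definition Theta :: "'o::wellorder set \<Rightarrow> 'o onf \<Rightarrow> 'o" where
  "Theta X = wfrec onf_rel (\<lambda>T x. LEAST t. t \<in> X \<and> ostar x < t \<and>
       (\<forall>z. onf_valid z \<and> onf_less z x \<and> ostar z < t \<longrightarrow> T z < t))"

primrec OmegaN :: "nat \<Rightarrow> 'o::wellorder onf" where
  "OmegaN 0 = Node Zero oone Zero"
| "OmegaN (Suc n) = Node (OmegaN n) oone Zero"

text \<open>Theta_X(epsilon_{Omega+1}) = sup_n Theta_X(Omega_n) (least upper bound in Omega).\<close>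
definition Theta_eps :: "'o::wellorder set \<Rightarrow> 'o" where
  "Theta_eps X = (LEAST y. \<forall>n. Theta X (OmegaN n) \<le> y)"

definition club :: "'o::wellorder set \<Rightarrow> bool" where
  "club X \<longleftrightarrow> (\<forall>a. \<exists>x\<in>X. a < x) \<and>
     (\<forall>g. (\<exists>a. a < g) \<and> (\<forall>a<g. \<exists>x\<in>X. a < x \<and> x < g) \<longrightarrow> g \<in> X)"

end

theory Submission
  imports Defs
begin

text \<open>Among the normal forms \<zeta> with \<zeta>* < \<xi> \<le> \<Theta>(\<zeta>) take a least one. Every smaller
\<zeta>' with \<zeta>'* < \<xi> then has \<Theta>(\<zeta>') < \<xi>, so \<xi> itself satisfies the defining condition
of \<Theta>(\<zeta>), whence \<Theta>(\<zeta>) = \<xi>. Such a \<zeta> exists: \<Omega>_n with \<xi> < \<Theta>(\<Omega>_n) if \<xi> > 1, and 0 if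
\<xi> = 1. The only real work is the well-foundedness of the ordering of normal forms.\<close>

lemma not_onf_less_Zero [simp]: "\<not> onf_less z Zero"
  by (cases z) simp_all

lemma Zero_in_acc_onf_rel: "Zero \<in> Wellfounded.acc onf_rel"
  by (rule accI) (simp add: onf_rel_def)

lemma Node_in_acc_onf_rel_if_smaller_exponents:
  assumes smaller: "\<And>a' b' c'. onf_valid (Node a' b' c') \<Longrightarrow> onf_less a' a \<Longrightarrow>
      Node a' b' c' \<in> Wellfounded.acc onf_rel"
    and valid: "onf_valid (Node a b c)"
  shows "Node a b c \<in> Wellfounded.acc onf_rel"
  using valid
proof (induction b arbitrary: c rule: less_induct)
  case (less b)
  have "c \<in> Wellfounded.acc onf_rel"
  proof (cases c)
    case Zero
    then show ?thesis using Zero_in_acc_onf_rel by simp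
  next
    case Node
    then show ?thesis using smaller less.prems by auto
  qed
  then show ?case
    using less.prems
  proof (induction c rule: acc_induct_rule)
    case (1 c)
    show ?case
    proof (rule accI)
      fix z assume "(z, Node a b c) \<in> onf_rel"
      then have z_valid: "onf_valid z" and z_less: "onf_less z (Node a b c)"
        by (auto simp: onf_rel_def)
      show "z \<in> Wellfounded.acc onf_rel"
      proof (cases z)
        case Zero
        then show ?thesis using Zero_in_acc_onf_rel by simp
      next
        case (Node a' b' c')
        consider "onf_less a' a" | "a' = a" "b' < b" | "a' = a" "b' = b" "onf_less c' c"
          using z_less Node by auto
        then show ?thesis
        proof cases
          case 1
          then show ?thesis using smaller z_valid Node by blast
        next
          case 2
          then show ?thesis using less.IH z_valid Node by blast
        next
          case 3
          then have "(c', c) \<in> onf_rel"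
            using z_valid Node \<open>onf_valid (Node a b c)\<close> by (simp add: onf_rel_def)
          then show ?thesis using "1.IH" 3 z_valid Node by blast
        qed
      qed
    qed
  qed
qed

lemma Node_in_acc_onf_rel:
  assumes "a \<in> Wellfounded.acc onf_rel" and "onf_valid (Node a b c)"
  shows "Node a b c \<in> Wellfounded.acc onf_rel"
  using assms
proof (induction a arbitrary: b c rule: acc_induct_rule)
  case (1 a)
  show ?case
  proof (rule Node_in_acc_onf_rel_if_smaller_exponents)
    fix a' b' c' assume "onf_valid (Node a' b' c')" and "onf_less a' a"
    moreover have "onf_valid a" using "1.prems" by simp
    ultimately show "Node a' b' c' \<in> Wellfounded.acc onf_rel"
      using "1.IH" by (simp add: onf_rel_def)
  qed (use "1.prems" in simp)
qed

lemma onf_valid_in_acc_onf_rel: "onf_valid x \<Longrightarrow> x \<in> Wellfounded.acc onf_rel"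
proof (induction x)
  case Zero
  show ?case by (rule Zero_in_acc_onf_rel)
next
  case (Node a b c)
  then show ?case by (simp add: Node_in_acc_onf_rel)
qed

lemma wf_onf_rel: "wf onf_rel"
proof (rule acc_wfI, rule allI, rule accI)
  fix x y :: "'a onf"
  assume "(y, x) \<in> onf_rel"
  then have "onf_valid y" by (simp add: onf_rel_def)
  then show "y \<in> Wellfounded.acc onf_rel" by (rule onf_valid_in_acc_onf_rel)
qed

lemma Theta_eq:
  assumes "onf_valid x"
  shows "Theta X x = (LEAST t. t \<in> X \<and> ostar x < t \<and>
       (\<forall>z. onf_valid z \<and> onf_less z x \<and> ostar z < t \<longrightarrow> Theta X z < t))"
proof -
  have "Theta X x = (LEAST t. t \<in> X \<and> ostar x < t \<and>
       (\<forall>z. onf_valid z \<and> onf_less z x \<and> ostar z < t \<longrightarrow> cut (Theta X) onf_rel x z < t))"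
    unfolding Theta_def by (rule wfrec[OF wf_onf_rel])
  also have "\<dots> = (LEAST t. t \<in> X \<and> ostar x < t \<and>
       (\<forall>z. onf_valid z \<and> onf_less z x \<and> ostar z < t \<longrightarrow> Theta X z < t))"
    using assms by (simp add: cut_def onf_rel_def)
  finally show ?thesis .
qed

lemma Theta_Zero: "Theta X Zero = (LEAST t. t \<in> X \<and> ozero < t)"
  by (subst Theta_eq) (simp_all add: ostar_def)

lemma Theta_attains:
  assumes "xi \<in> X" and "onf_valid w" and "ostar w < xi" and "xi \<le> Theta X w"
  shows "\<exists>z. onf_valid z \<and> Theta X z = xi"
proof -
  define S where "S = {z. onf_valid z \<and> ostar z < xi \<and> xi \<le> Theta X z}"
  have "w \<in> S" using assms by (simp add: S_def)
  then obtain z where "z \<in> S" and z_min: "\<And>y. (y, z) \<in> onf_rel \<Longrightarrow> y \<notin> S"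
    using wfE_min[OF wf_onf_rel] by metis
  then have z_valid: "onf_valid z" and "ostar z < xi" and "xi \<le> Theta X z"
    by (auto simp: S_def)
  have "Theta X z \<le> xi"
    unfolding Theta_eq[OF z_valid]
  proof (rule Least_le, intro conjI allI impI)
    fix y assume y: "onf_valid y \<and> onf_less y z \<and> ostar y < xi"
    then have "y \<notin> S" using z_min z_valid by (simp add: onf_rel_def)
    with y show "Theta X y < xi" by (auto simp: S_def)
  qed fact+
  with \<open>xi \<le> Theta X z\<close> z_valid show ?thesis by auto
qed

lemma ozero_le [simp]: "ozero \<le> x"
  unfolding ozero_def by (rule Least_le) simp

lemma ozero_less_iff_neq: "ozero < x \<longleftrightarrow> x \<noteq> ozero"
  by (auto simp: order.strict_iff_order)

lemma oone_le: "ozero < x \<Longrightarrow> oone \<le> x"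
  unfolding oone_def by (rule Least_le)

lemma ozero_less_oone:
  fixes x :: "'o::wellorder"
  assumes "ozero < x"
  shows "ozero < (oone :: 'o)"
  unfolding oone_def by (rule LeastI[of "(<) ozero", OF assms])

lemma oone_le_Theta_Zero:
  assumes "x \<in> X" and "ozero < x"
  shows "oone \<le> Theta X Zero"
proof -
  have "Theta X Zero \<in> X \<and> ozero < Theta X Zero"
    unfolding Theta_Zero by (rule LeastI) (use assms in blast)
  then show ?thesis by (simp add: oone_le)
qed

lemma onf_valid_OmegaN: "ozero < (oone :: 'o::wellorder) \<Longrightarrow> onf_valid (OmegaN n :: 'o onf)"
  by (induction n) simp_all

lemma coeffs_OmegaN: "coeffs (OmegaN n) = {ozero, oone}"
  by (induction n) auto

lemma ostar_OmegaN: "ozero < (oone :: 'o::wellorder) \<Longrightarrow> ostar (OmegaN n :: 'o onf) = oone"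
  by (simp add: ostar_def coeffs_OmegaN)

lemma less_Theta_epsD:
  assumes "xi < Theta_eps X"
  shows "\<exists>n. xi < Theta X (OmegaN n)"
proof (rule ccontr)
  assume "\<nexists>n. xi < Theta X (OmegaN n)"
  then have "Theta_eps X \<le> xi"
    unfolding Theta_eps_def by (intro Least_le) (simp add: not_less)
  with assms show False by simp
qed

theorem corollary3p4:
  fixes X :: "'o::wellorder set" and xi :: 'o
  assumes "omega1_type TYPE('o)"
    and "club X" and "ozero \<notin> X"
    and "xi \<in> X" and "xi < Theta_eps X"
  shows "\<exists>z. onf_valid z \<and> Theta X z = xi"
proof -
  have xi_pos: "ozero < xi" using assms(3,4) by (auto simp: ozero_less_iff_neq)
  then have one_pos: "ozero < (oone :: 'o)" by (rule ozero_less_oone)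
  consider "oone < xi" | "xi = oone" using oone_le[OF xi_pos] by fastforce
  then show ?thesis
  proof cases
    case 1
    obtain n where "xi < Theta X (OmegaN n)" using less_Theta_epsD assms(5) by blast
    moreover have "ostar (OmegaN n) < xi" using ostar_OmegaN[OF one_pos] 1 by simp
    ultimately show ?thesis
      using Theta_attains[OF assms(4) onf_valid_OmegaN[OF one_pos]] by simp
  next
    case 2
    then have "xi \<le> Theta X Zero" using oone_le_Theta_Zero[OF assms(4) xi_pos] by simp
    moreover have "ostar Zero < xi" using xi_pos by (simp add: ostar_def)
    ultimately show ?thesis using Theta_attains assms(4) onf_valid.simps(1) by blast
  qed
qed

end
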